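(* Let $R$ be a ring, $M$ an $R$-module of finite length, and $A_1,A_2,B_1,B_2\subset M$ submodules such that $A_1$ and $A_2$ are coprime, $A_1\oplus A_2=M$, $B_1\oplus B_2=M$, and $A_1\cong B_1$. Then $A_1\oplus B_2=M$ and $B_1\oplus A_2=M$.
   Context: Modules are left modules. A module has finite length if every totally ordered set of submodules is finite. For submodules $C,D$ of $M$, $C\oplus D=M$ means the natural map $C\oplus D\to M$ is an isomorphism. An $R$-module $D$ is a divisor of $M$ if $M\cong D\oplus N$ for some $R$-module $N$. Two $R$-modules of finite length are coprime if $0$ is (up to isomorphism) the only $R$-module that is a divisor of both. *)

theory Defs
  imports "HOL-Algebra.Module"
begin

text \<open>The library locale module requires a commutative ring, so we state the
  left module axioms directly (same axioms as the library, with ring instead of cring).\<close>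

definition lmodule :: "('r, 'z) ring_scheme \<Rightarrow> ('r, 'a) module \<Rightarrow> bool" where
  "lmodule R M \<longleftrightarrow> ring R \<and> abelian_group M \<and>
     (\<forall>a \<in> carrier R. \<forall>x \<in> carrier M. a \<odot>\<^bsub>M\<^esub> x \<in> carrier M) \<and>
     (\<forall>a \<in> carrier R. \<forall>b \<in> carrier R. \<forall>x \<in> carrier M.
        (a \<oplus>\<^bsub>R\<^esub> b) \<odot>\<^bsub>M\<^esub> x = a \<odot>\<^bsub>M\<^esub> x \<oplus>\<^bsub>M\<^esub> b \<odot>\<^bsub>M\<^esub> x) \<and>
     (\<forall>a \<in> carrier R. \<forall>x \<in> carrier M. \<forall>y \<in> carrier M.
        a \<odot>\<^bsub>M\<^esub> (x \<oplus>\<^bsub>M\<^esub> y) = a \<odot>\<^bsub>M\<^esub> x \<oplus>\<^bsub>M\<^esub> a \<odot>\<^bsub>M\<^esub> y) \<and>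
     (\<forall>a \<in> carrier R. \<forall>b \<in> carrier R. \<forall>x \<in> carrier M.
        (a \<otimes>\<^bsub>R\<^esub> b) \<odot>\<^bsub>M\<^esub> x = a \<odot>\<^bsub>M\<^esub> (b \<odot>\<^bsub>M\<^esub> x)) \<and>
     (\<forall>x \<in> carrier M. \<one>\<^bsub>R\<^esub> \<odot>\<^bsub>M\<^esub> x = x)"

definition submod :: "('r, 'a) module \<Rightarrow> 'a set \<Rightarrow> ('r, 'a) module" where
  "submod M A = M\<lparr>carrier := A\<rparr>"

definition finite_length :: "('r, 'z) ring_scheme \<Rightarrow> ('r, 'a) module \<Rightarrow> bool" where
  "finite_length R M \<longleftrightarrow>
     (\<forall>C. C \<subseteq> {N. submodule N R M} \<and> (\<forall>X \<in> C. \<forall>Y \<in> C. X \<subseteq> Y \<or> Y \<subseteq> X) \<longrightarrow> finite C)"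

text \<open>Internal direct sum C \<oplus> D = M: C, D submodules and the natural map
  C \<times> D \<rightarrow> M, (c,d) \<mapsto> c + d, is bijective (it is always R-linear, so this
  is the same as being an isomorphism).\<close>
definition internal_dsum :: "('r, 'z) ring_scheme \<Rightarrow> ('r, 'a) module \<Rightarrow> 'a set \<Rightarrow> 'a set \<Rightarrow> bool" where
  "internal_dsum R M C D \<longleftrightarrow> submodule C R M \<and> submodule D R M \<and>
     bij_betw (\<lambda>(c, d). c \<oplus>\<^bsub>M\<^esub> d) (C \<times> D) (carrier M)"

definition mod_iso :: "('r, 'z) ring_scheme \<Rightarrow> ('r, 'a) module \<Rightarrow> ('r, 'b) module \<Rightarrow> ('a \<Rightarrow> 'b) \<Rightarrow> bool" where
  "mod_iso R M N f \<longleftrightarrow>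
     (\<forall>x \<in> carrier M. \<forall>y \<in> carrier M. f (x \<oplus>\<^bsub>M\<^esub> y) = f x \<oplus>\<^bsub>N\<^esub> f y) \<and>
     (\<forall>a \<in> carrier R. \<forall>x \<in> carrier M. f (a \<odot>\<^bsub>M\<^esub> x) = a \<odot>\<^bsub>N\<^esub> f x) \<and>
     bij_betw f (carrier M) (carrier N)"

definition mod_isomorphic :: "('r, 'z) ring_scheme \<Rightarrow> ('r, 'a) module \<Rightarrow> ('r, 'b) module \<Rightarrow> bool" where
  "mod_isomorphic R M N \<longleftrightarrow> (\<exists>f. mod_iso R M N f)"

text \<open>External direct sum of two modules (the ring fields mult/one are irrelevant).\<close>
definition ext_dsum :: "('r, 'a) module \<Rightarrow> ('r, 'b) module \<Rightarrow> ('r, 'a \<times> 'b) module" where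
  "ext_dsum D N =
     \<lparr>carrier = carrier D \<times> carrier N,
      mult = (\<lambda>_ _. undefined), one = undefined,
      zero = (\<zero>\<^bsub>D\<^esub>, \<zero>\<^bsub>N\<^esub>),
      add = (\<lambda>(x, y) (x', y'). (x \<oplus>\<^bsub>D\<^esub> x', y \<oplus>\<^bsub>N\<^esub> y')),
      smult = (\<lambda>r (x, y). (r \<odot>\<^bsub>D\<^esub> x, r \<odot>\<^bsub>N\<^esub> y))\<rparr>"

text \<open>The complement N
  ranges over modules with the same element type as D (any complement is
  isomorphic to a submodule of M, so no generality is lost in our uses).\<close>
definition divisor :: "('r, 'z) ring_scheme \<Rightarrow> ('r, 'a) module \<Rightarrow> ('r, 'a) module \<Rightarrow> bool" where
  "divisor R D M \<longleftrightarrow> (\<exists>N :: ('r, 'a) module. lmodule R N \<and> mod_isomorphic R M (ext_dsum D N))"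

text \<open>Coprime: up to isomorphism, 0 is the only common divisor.  Candidate
  divisors range over R-modules with the element type of the given modules.\<close>
definition coprime_mod :: "('r, 'z) ring_scheme \<Rightarrow> ('r, 'a) module \<Rightarrow> ('r, 'a) module \<Rightarrow> bool" where
  "coprime_mod R X Y \<longleftrightarrow>
     (\<forall>D :: ('r, 'a) module. lmodule R D \<and> divisor R D X \<and> divisor R D Y
        \<longrightarrow> carrier D = {\<zero>\<^bsub>D\<^esub>})"

end

theory Submission
  imports Defs "HOL-Library.Infinite_Set"
begin

(* Let pi_A, pi_B be the projections of M onto A1 along A2 and onto B1 along B2, and
   phi : A1 -> B1 an isomorphism.  Splitting phi x along A1 + A2 writes the identity of A1 as
   phi^-1 pi_B pi_A phi plus an endomorphism factoring through A2.  By Fitting's lemma such an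
   endomorphism restricts to an automorphism of its eventual image, which is then a retract,
   hence a divisor, of both A1 and A2; by coprimality that image is zero, so the endomorphism is
   nilpotent.  Therefore pi_B pi_A is injective on B1, and finite length makes
   pi_B : A1 -> B1 and pi_A : B1 -> A1 bijective, which says exactly that A1 and B1 are
   complements of B2 and A2. *)

lemma mono_finite_range_eventually_const:
  fixes S :: "nat \<Rightarrow> 'a::order"
  assumes fin: "finite (range S)" and mono: "mono S \<or> antimono S"
  shows "\<exists>k. \<forall>j\<ge>k. S j = S k"
proof -
  obtain y where y: "infinite (S -` {y})"
    using inf_img_fin_dom[OF fin infinite_UNIV_nat] by auto
  then obtain k where k: "S k = y"
    by (metis finite.emptyI vimage_singleton_eq ex_in_conv)
  have "S j = S k" if "j \<ge> k" for j
  proof -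
    obtain m where m: "m \<ge> j" "S m = y"
      using y unfolding infinite_nat_iff_unbounded_le by auto
    from mono show ?thesis
    proof
      assume "mono S"
      then show ?thesis
        using monoD[of S k j] monoD[of S j m] k m \<open>j \<ge> k\<close> by auto
    next
      assume "antimono S"
      then show ?thesis
        using antimonoD[of S k j] antimonoD[of S j m] k m \<open>j \<ge> k\<close> by auto
    qed
  qed
  then show ?thesis by blast
qed

lemma inj_on_funpow:
  assumes "inj_on h X" and "h ` X \<subseteq> X"
  shows "inj_on (h ^^ k) X"
proof (induction k)
  case 0
  then show ?case by simp
next
  case (Suc k)
  have "inj_on (h ^^ k \<circ> h) X"
    using Suc assms by (intro comp_inj_on) (auto intro: inj_on_subset)
  then show ?case by (simp only: funpow_Suc_right)
qed

locale left_module =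
  fixes R :: "('r, 'z) ring_scheme" and M :: "('r, 'a) module" (structure)
  assumes lmodule: "lmodule R M"
begin

sublocale abelian_group M
  using lmodule unfolding lmodule_def by auto

lemma smult_closed: "a \<in> carrier R \<Longrightarrow> x \<in> carrier M \<Longrightarrow> a \<odot> x \<in> carrier M"
  using lmodule unfolding lmodule_def by auto

lemma smult_r_distr:
  "a \<in> carrier R \<Longrightarrow> x \<in> carrier M \<Longrightarrow> y \<in> carrier M \<Longrightarrow> a \<odot> (x \<oplus> y) = a \<odot> x \<oplus> a \<odot> y"
  using lmodule unfolding lmodule_def by auto

lemma smult_r_null: "a \<in> carrier R \<Longrightarrow> a \<odot> \<zero> = \<zero>"
  using smult_r_distr[of a \<zero> \<zero>] smult_closed[of a \<zero>] by simp

lemma smult_r_minus: "a \<in> carrier R \<Longrightarrow> x \<in> carrier M \<Longrightarrow> a \<odot> (\<ominus> x) = \<ominus> (a \<odot> x)"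
  using smult_r_distr[of a x "\<ominus> x"] smult_closed[of a] smult_r_null[of a]
  by (metis a_inv_closed minus_equality r_neg)

lemma smult_r_diff:
  "a \<in> carrier R \<Longrightarrow> x \<in> carrier M \<Longrightarrow> y \<in> carrier M \<Longrightarrow> a \<odot> (x \<ominus> y) = a \<odot> x \<ominus> a \<odot> y"
  by (simp add: minus_eq smult_r_distr smult_r_minus)

lemma add_minus_cancel_left: "a \<in> carrier M \<Longrightarrow> b \<in> carrier M \<Longrightarrow> a \<oplus> (b \<ominus> a) = b"
  by (metis a_inv_closed a_lcomm minus_eq r_neg r_zero)

lemma add_minus_cancel_left': "a \<in> carrier M \<Longrightarrow> b \<in> carrier M \<Longrightarrow> a \<oplus> b \<ominus> a = b"
  using add_minus_cancel_left by (simp add: minus_eq a_ac)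

lemma minus_self: "a \<in> carrier M \<Longrightarrow> a \<ominus> a = \<zero>"
  by (simp add: minus_eq r_neg)

lemma minus_eq_zero_iff: "a \<in> carrier M \<Longrightarrow> b \<in> carrier M \<Longrightarrow> a \<ominus> b = \<zero> \<longleftrightarrow> a = b"
  by (metis add_minus_cancel_left minus_self)

lemma add_minus_add:
  "x \<in> carrier M \<Longrightarrow> y \<in> carrier M \<Longrightarrow> a \<in> carrier M \<Longrightarrow> b \<in> carrier M \<Longrightarrow>
   (x \<oplus> y) \<ominus> (a \<oplus> b) = (x \<ominus> a) \<oplus> (y \<ominus> b)"
  by (simp add: minus_eq minus_add a_ac)

lemma submodule_subset: "submodule X R M \<Longrightarrow> X \<subseteq> carrier M"
  unfolding submodule_def subgroup_def by auto

lemma submodule_zero: "submodule X R M \<Longrightarrow> \<zero> \<in> X"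
  unfolding submodule_def subgroup_def by auto

lemma submodule_add: "submodule X R M \<Longrightarrow> x \<in> X \<Longrightarrow> y \<in> X \<Longrightarrow> x \<oplus> y \<in> X"
  unfolding submodule_def subgroup_def by auto

lemma submodule_neg: "submodule X R M \<Longrightarrow> x \<in> X \<Longrightarrow> \<ominus> x \<in> X"
  unfolding submodule_def subgroup_def a_inv_def by auto

lemma submodule_diff: "submodule X R M \<Longrightarrow> x \<in> X \<Longrightarrow> y \<in> X \<Longrightarrow> x \<ominus> y \<in> X"
  by (simp add: minus_eq submodule_add submodule_neg)

lemma submodule_smult: "submodule X R M \<Longrightarrow> a \<in> carrier R \<Longrightarrow> x \<in> X \<Longrightarrow> a \<odot> x \<in> X"
  unfolding submodule_def submodule_axioms_def by auto

lemma submoduleI: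
  assumes "X \<subseteq> carrier M" "\<zero> \<in> X" "\<And>x y. x \<in> X \<Longrightarrow> y \<in> X \<Longrightarrow> x \<oplus> y \<in> X"
    "\<And>x. x \<in> X \<Longrightarrow> \<ominus> x \<in> X" "\<And>a x. a \<in> carrier R \<Longrightarrow> x \<in> X \<Longrightarrow> a \<odot> x \<in> X"
  shows "submodule X R M"
  unfolding submodule_def submodule_axioms_def subgroup_def using assms
  by (auto simp: a_inv_def)

lemma submodule_carrier: "submodule (carrier M) R M"
  by (rule submoduleI) (auto simp: smult_closed)

lemma submodule_lmodule:
  assumes X: "submodule X R M"
  shows "lmodule R (submod M X)"
proof -
  note X_carrier = submodule_subset[OF X, THEN subsetD]
  have "abelian_group (M\<lparr>carrier := X\<rparr>)"
  proof (rule abelian_groupI)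
    fix x assume "x \<in> carrier (M\<lparr>carrier := X\<rparr>)"
    then show "\<exists>y\<in>carrier (M\<lparr>carrier := X\<rparr>). y \<oplus>\<^bsub>M\<lparr>carrier := X\<rparr>\<^esub> x = \<zero>\<^bsub>M\<lparr>carrier := X\<rparr>\<^esub>"
      using submodule_neg[OF X] X_carrier by (auto intro!: bexI[of _ "\<ominus> x"] simp: l_neg)
  qed (use X X_carrier submodule_zero submodule_add in \<open>auto simp: a_ac\<close>)
  then show ?thesis
    using lmodule X submodule_smult X_carrier unfolding lmodule_def submod_def by auto
qed

end

definition submodule_hom ::
    "('r, 'z) ring_scheme \<Rightarrow> ('r, 'a) module \<Rightarrow> 'a set \<Rightarrow> 'a set \<Rightarrow> ('a \<Rightarrow> 'a) \<Rightarrow> bool" where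
  "submodule_hom R M X Y h \<longleftrightarrow> (\<forall>x\<in>X. h x \<in> Y) \<and>
     (\<forall>x\<in>X. \<forall>y\<in>X. h (x \<oplus>\<^bsub>M\<^esub> y) = h x \<oplus>\<^bsub>M\<^esub> h y) \<and>
     (\<forall>a\<in>carrier R. \<forall>x\<in>X. h (a \<odot>\<^bsub>M\<^esub> x) = a \<odot>\<^bsub>M\<^esub> h x)"

context left_module
begin

lemma submodule_hom_closed: "submodule_hom R M X Y h \<Longrightarrow> x \<in> X \<Longrightarrow> h x \<in> Y"
  unfolding submodule_hom_def by auto

lemma submodule_hom_add:
  "submodule_hom R M X Y h \<Longrightarrow> x \<in> X \<Longrightarrow> y \<in> X \<Longrightarrow> h (x \<oplus> y) = h x \<oplus> h y"
  unfolding submodule_hom_def by auto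

lemma submodule_hom_smult:
  "submodule_hom R M X Y h \<Longrightarrow> a \<in> carrier R \<Longrightarrow> x \<in> X \<Longrightarrow> h (a \<odot> x) = a \<odot> h x"
  unfolding submodule_hom_def by auto

lemma submodule_hom_id: "submodule_hom R M X X (\<lambda>x. x)"
  unfolding submodule_hom_def by auto

lemma submodule_hom_comp:
  "submodule_hom R M X Y h \<Longrightarrow> submodule_hom R M Y Z g \<Longrightarrow> submodule_hom R M X Z (\<lambda>x. g (h x))"
  unfolding submodule_hom_def by auto

lemma submodule_hom_mono:
  "submodule_hom R M X Y h \<Longrightarrow> X' \<subseteq> X \<Longrightarrow> h ` X' \<subseteq> Y' \<Longrightarrow> submodule_hom R M X' Y' h"
  unfolding submodule_hom_def by (auto simp: subset_iff)

lemma submodule_hom_funpow: "submodule_hom R M X X h \<Longrightarrow> submodule_hom R M X X (h ^^ k)"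
proof (induction k)
  case 0
  then show ?case using submodule_hom_id by (simp add: id_def)
next
  case (Suc k)
  then show ?case using submodule_hom_comp[of X X "h ^^ k" X h] by (simp add: comp_def)
qed

context
  fixes X Y h
  assumes X: "submodule X R M" and Y: "submodule Y R M" and h: "submodule_hom R M X Y h"
begin

lemma submodule_hom_zero: "h \<zero> = \<zero>"
proof -
  have "h \<zero> \<oplus> h \<zero> = h \<zero>"
    using submodule_hom_add[OF h, of \<zero> \<zero>] submodule_zero[OF X] by simp
  moreover have "h \<zero> \<in> carrier M"
    using submodule_hom_closed[OF h submodule_zero[OF X]] submodule_subset[OF Y] by auto
  ultimately show ?thesis by simp
qed

lemma submodule_hom_neg:
  assumes x: "x \<in> X"
  shows "h (\<ominus> x) = \<ominus> h x"
proof -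
  have "h x \<oplus> h (\<ominus> x) = \<zero>"
    using submodule_hom_add[OF h x submodule_neg[OF X x]] submodule_subset[OF X] x
      submodule_hom_zero by (auto simp: r_neg)
  moreover have "h x \<in> carrier M" "h (\<ominus> x) \<in> carrier M"
    using submodule_hom_closed[OF h] submodule_neg[OF X x] x submodule_subset[OF Y] by auto
  ultimately show ?thesis
    by (metis minus_equality a_comm)
qed

lemma submodule_hom_diff: "x \<in> X \<Longrightarrow> y \<in> X \<Longrightarrow> h (x \<ominus> y) = h x \<ominus> h y"
  by (simp add: minus_eq submodule_hom_add[OF h] submodule_hom_neg submodule_neg[OF X])

lemma submodule_hom_inj_on_iff: "inj_on h X \<longleftrightarrow> (\<forall>x\<in>X. h x = \<zero> \<longrightarrow> x = \<zero>)"
proof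
  assume ker: "\<forall>x\<in>X. h x = \<zero> \<longrightarrow> x = \<zero>"
  show "inj_on h X"
  proof (rule inj_onI)
    fix x y assume xy: "x \<in> X" "y \<in> X" "h x = h y"
    have "h (x \<ominus> y) = \<zero>"
      using submodule_hom_diff[OF xy(1,2)] xy(3) minus_self[of "h y"]
        submodule_hom_closed[OF h xy(2)] submodule_subset[OF Y] by auto
    then have "x \<ominus> y = \<zero>"
      using ker submodule_diff[OF X xy(1,2)] by blast
    then show "x = y"
      using minus_eq_zero_iff xy(1,2) submodule_subset[OF X] by blast
  qed
next
  assume "inj_on h X"
  then show "\<forall>x\<in>X. h x = \<zero> \<longrightarrow> x = \<zero>"
    using submodule_hom_zero submodule_zero[OF X] by (metis inj_onD)
qed

lemma submodule_image: "submodule (h ` X) R M"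
proof (rule submoduleI)
  show "h ` X \<subseteq> carrier M"
    using submodule_hom_closed[OF h] submodule_subset[OF Y] by auto
  show "\<zero> \<in> h ` X"
    using submodule_hom_zero submodule_zero[OF X] by (metis image_eqI)
  show "x \<oplus> y \<in> h ` X" if xy: "x \<in> h ` X" "y \<in> h ` X" for x y
  proof -
    obtain u v where "u \<in> X" "v \<in> X" "x = h u" "y = h v"
      using xy by blast
    then show ?thesis
      using submodule_hom_add[OF h] submodule_add[OF X] by (metis image_eqI)
  qed
  show "\<ominus> x \<in> h ` X" if "x \<in> h ` X" for x
  proof -
    obtain u where "u \<in> X" "x = h u"
      using \<open>x \<in> h ` X\<close> by blast
    then show ?thesis
      using submodule_hom_neg submodule_neg[OF X] by (metis image_eqI)
  qed
  show "a \<odot> x \<in> h ` X" if a: "a \<in> carrier R" and "x \<in> h ` X" for a x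
  proof -
    obtain u where "u \<in> X" "x = h u"
      using \<open>x \<in> h ` X\<close> by blast
    then show ?thesis
      using submodule_hom_smult[OF h a] submodule_smult[OF X a] by (metis image_eqI)
  qed
qed

lemma submodule_kernel: "submodule {x \<in> X. h x = \<zero>} R M"
proof (rule submoduleI)
  show "{x \<in> X. h x = \<zero>} \<subseteq> carrier M"
    using submodule_subset[OF X] by auto
  show "\<zero> \<in> {x \<in> X. h x = \<zero>}"
    using submodule_zero[OF X] submodule_hom_zero by simp
  show "x \<oplus> y \<in> {x \<in> X. h x = \<zero>}" if "x \<in> {x \<in> X. h x = \<zero>}" "y \<in> {x \<in> X. h x = \<zero>}" for x y
    using that submodule_add[OF X] submodule_hom_add[OF h] by simp
  show "\<ominus> x \<in> {x \<in> X. h x = \<zero>}" if "x \<in> {x \<in> X. h x = \<zero>}" for x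
    using that submodule_neg[OF X] submodule_hom_neg by simp
  show "a \<odot> x \<in> {x \<in> X. h x = \<zero>}" if "a \<in> carrier R" "x \<in> {x \<in> X. h x = \<zero>}" for a x
    using that submodule_smult[OF X] submodule_hom_smult[OF h] smult_r_null by simp
qed

lemma submodule_hom_the_inv_into:
  assumes bij: "bij_betw h X Y"
  shows "submodule_hom R M Y X (the_inv_into X h)"
proof -
  let ?g = "the_inv_into X h"
  have g: "?g y \<in> X" "h (?g y) = y" if "y \<in> Y" for y
    using that bij by (auto simp: bij_betw_def the_inv_into_into f_the_inv_into_f)
  have gh: "?g (h x) = x" if "x \<in> X" for x
    using that bij by (auto simp: bij_betw_def the_inv_into_f_f)
  show ?thesis
    unfolding submodule_hom_def
  proof (intro conjI ballI)
    fix x y assume "x \<in> Y" "y \<in> Y"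
    then have "x \<oplus> y = h (?g x \<oplus> ?g y)"
      using g submodule_hom_add[OF h] by simp
    then show "?g (x \<oplus> y) = ?g x \<oplus> ?g y"
      using g gh submodule_add[OF X] \<open>x \<in> Y\<close> \<open>y \<in> Y\<close> by simp
  next
    fix a x assume "a \<in> carrier R" "x \<in> Y"
    then have "a \<odot> x = h (a \<odot> ?g x)"
      using g submodule_hom_smult[OF h] by simp
    then show "?g (a \<odot> x) = a \<odot> ?g x"
      using g gh submodule_smult[OF X] \<open>a \<in> carrier R\<close> \<open>x \<in> Y\<close> by simp
  qed (use g in auto)
qed

end

end

definition dsum_proj :: "('r, 'a) module \<Rightarrow> 'a set \<Rightarrow> 'a set \<Rightarrow> 'a \<Rightarrow> 'a" where
  "dsum_proj M C D m = (THE c. c \<in> C \<and> (\<exists>d\<in>D. m = c \<oplus>\<^bsub>M\<^esub> d))"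

context left_module
begin

lemma internal_dsumI:
  assumes "submodule C R M" "submodule D R M"
    and "\<And>m. m \<in> carrier M \<Longrightarrow> \<exists>c\<in>C. \<exists>d\<in>D. m = c \<oplus> d"
    and "\<And>c c' d d'. c \<in> C \<Longrightarrow> c' \<in> C \<Longrightarrow> d \<in> D \<Longrightarrow> d' \<in> D \<Longrightarrow> c \<oplus> d = c' \<oplus> d' \<Longrightarrow>
      c = c' \<and> d = d'"
  shows "internal_dsum R M C D"
  unfolding internal_dsum_def bij_betw_def inj_on_def
proof (intro conjI assms(1,2) ballI impI)
  show "(\<lambda>(c, d). c \<oplus> d) ` (C \<times> D) = carrier M"
  proof
    show "(\<lambda>(c, d). c \<oplus> d) ` (C \<times> D) \<subseteq> carrier M"
      using submodule_subset[OF assms(1)] submodule_subset[OF assms(2)] by auto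
    show "carrier M \<subseteq> (\<lambda>(c, d). c \<oplus> d) ` (C \<times> D)"
      using assms(3) by fastforce
  qed
qed (use assms(4) in auto)

context
  fixes C D
  assumes ds: "internal_dsum R M C D"
begin

lemma internal_dsum_submodules: "submodule C R M" "submodule D R M"
  using ds unfolding internal_dsum_def by auto

lemma internal_dsum_decomp: "m \<in> carrier M \<Longrightarrow> \<exists>c\<in>C. \<exists>d\<in>D. m = c \<oplus> d"
  using ds unfolding internal_dsum_def bij_betw_def by fastforce

lemma internal_dsum_unique:
  "c \<in> C \<Longrightarrow> c' \<in> C \<Longrightarrow> d \<in> D \<Longrightarrow> d' \<in> D \<Longrightarrow> c \<oplus> d = c' \<oplus> d' \<Longrightarrow> c = c' \<and> d = d'"
  using ds unfolding internal_dsum_def bij_betw_def inj_on_def by auto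

lemma internal_dsum_commute: "internal_dsum R M D C"
proof (rule internal_dsumI[OF internal_dsum_submodules(2,1)])
  note carrier = submodule_subset[OF internal_dsum_submodules(1)]
    submodule_subset[OF internal_dsum_submodules(2)]
  show "\<exists>d\<in>D. \<exists>c\<in>C. m = d \<oplus> c" if "m \<in> carrier M" for m
    using internal_dsum_decomp[OF that] carrier a_comm by blast
  show "d = d' \<and> c = c'"
    if "d \<in> D" "d' \<in> D" "c \<in> C" "c' \<in> C" "d \<oplus> c = d' \<oplus> c'" for c c' d d'
    using that internal_dsum_unique[of c c' d d'] carrier a_comm by (metis subsetD)
qed

lemma dsum_proj_eq: "c \<in> C \<Longrightarrow> d \<in> D \<Longrightarrow> dsum_proj M C D (c \<oplus> d) = c"
  unfolding dsum_proj_def by (rule the_equality) (use internal_dsum_unique in blast)+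

lemma dsum_proj_self: "c \<in> C \<Longrightarrow> dsum_proj M C D c = c"
  using dsum_proj_eq[of c \<zero>] submodule_zero[OF internal_dsum_submodules(2)]
    submodule_subset[OF internal_dsum_submodules(1)] by auto

lemma dsum_proj_vanish: "d \<in> D \<Longrightarrow> dsum_proj M C D d = \<zero>"
  using dsum_proj_eq[of \<zero> d] submodule_zero[OF internal_dsum_submodules(1)]
    submodule_subset[OF internal_dsum_submodules(2)] by auto

end

lemma dsum_proj_decomp:
  assumes ds: "internal_dsum R M C D" and "m \<in> carrier M"
  shows "dsum_proj M C D m \<in> C" "dsum_proj M D C m \<in> D"
    and "m = dsum_proj M C D m \<oplus> dsum_proj M D C m"
proof -
  obtain c d where cd: "c \<in> C" "d \<in> D" "m = c \<oplus> d"
    using internal_dsum_decomp[OF ds \<open>m \<in> carrier M\<close>] by blast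
  moreover have "m = d \<oplus> c"
    using cd submodule_subset internal_dsum_submodules[OF ds] a_comm by blast
  ultimately have "dsum_proj M C D m = c" "dsum_proj M D C m = d"
    using dsum_proj_eq[OF ds] dsum_proj_eq[OF internal_dsum_commute[OF ds]] by metis+
  with cd show "dsum_proj M C D m \<in> C" "dsum_proj M D C m \<in> D"
    and "m = dsum_proj M C D m \<oplus> dsum_proj M D C m" by simp_all
qed

context
  fixes C D
  assumes ds: "internal_dsum R M C D"
begin

lemma dsum_proj_hom: "submodule_hom R M (carrier M) C (dsum_proj M C D)"
proof -
  let ?p = "dsum_proj M C D" and ?q = "dsum_proj M D C"
  note C = internal_dsum_submodules(1)[OF ds] and D = internal_dsum_submodules(2)[OF ds]
  note dec = dsum_proj_decomp[OF ds]
  have carrier: "?p x \<in> carrier M" "?q x \<in> carrier M" if "x \<in> carrier M" for x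
    using dec(1,2)[OF that] submodule_subset[OF C] submodule_subset[OF D] by auto
  have add: "?p (x \<oplus> y) = ?p x \<oplus> ?p y" if x: "x \<in> carrier M" and y: "y \<in> carrier M" for x y
  proof -
    have "x \<oplus> y = (?p x \<oplus> ?q x) \<oplus> (?p y \<oplus> ?q y)"
      by (simp only: dec(3)[OF x, symmetric] dec(3)[OF y, symmetric])
    also have "\<dots> = (?p x \<oplus> ?p y) \<oplus> (?q x \<oplus> ?q y)"
      using carrier[OF x] carrier[OF y] by (simp add: a_ac)
    finally show ?thesis
      using dsum_proj_eq[OF ds] submodule_add[OF C] submodule_add[OF D] dec(1,2) x y by simp
  qed
  have smult: "?p (a \<odot> x) = a \<odot> ?p x" if a: "a \<in> carrier R" and x: "x \<in> carrier M" for a x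
  proof -
    have "a \<odot> x = a \<odot> (?p x \<oplus> ?q x)"
      by (simp only: dec(3)[OF x, symmetric])
    also have "\<dots> = a \<odot> ?p x \<oplus> a \<odot> ?q x"
      using smult_r_distr[OF a carrier[OF x]] .
    finally show ?thesis
      using dsum_proj_eq[OF ds] submodule_smult[OF C a] submodule_smult[OF D a] dec(1,2)[OF x]
      by simp
  qed
  show ?thesis
    unfolding submodule_hom_def using dec(1) add smult by blast
qed

lemma dsum_proj_zero_imp_mem:
  assumes "m \<in> carrier M" and "dsum_proj M C D m = \<zero>"
  shows "m \<in> D"
proof -
  obtain c d where cd: "c \<in> C" "d \<in> D" "m = c \<oplus> d"
    using internal_dsum_decomp[OF ds assms(1)] by blast
  then have "c = \<zero>"
    using dsum_proj_eq[OF ds] assms(2) by simp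
  then show ?thesis
    using cd submodule_subset[OF internal_dsum_submodules(2)[OF ds]] by auto
qed

lemma dsum_proj_add_right:
  assumes x: "x \<in> carrier M" and d: "d \<in> D"
  shows "dsum_proj M C D (x \<oplus> d) = dsum_proj M C D x"
proof -
  have "dsum_proj M C D x \<in> carrier M"
    using submodule_hom_closed[OF dsum_proj_hom x]
      submodule_subset[OF internal_dsum_submodules(1)[OF ds]] by auto
  then show ?thesis
    using submodule_hom_add[OF dsum_proj_hom x] dsum_proj_vanish[OF ds d] d
      submodule_subset[OF internal_dsum_submodules(2)[OF ds]] by auto
qed

lemma internal_dsum_exchange:
  assumes E: "submodule E R M" and bij: "bij_betw (dsum_proj M C D) E C"
  shows "internal_dsum R M E D"
proof (rule internal_dsumI[OF E internal_dsum_submodules(2)[OF ds]])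
  let ?p = "dsum_proj M C D"
  note E_carrier = submodule_subset[OF E, THEN subsetD]
    and C_carrier = submodule_subset[OF internal_dsum_submodules(1)[OF ds], THEN subsetD]
    and D_carrier = submodule_subset[OF internal_dsum_submodules(2)[OF ds], THEN subsetD]
  fix m assume m: "m \<in> carrier M"
  obtain e where e: "e \<in> E" "?p e = ?p m"
    using bij dsum_proj_decomp(1)[OF ds m] unfolding bij_betw_def by (metis imageE)
  have "?p (m \<ominus> e) = ?p m \<ominus> ?p e"
    by (rule submodule_hom_diff[OF submodule_carrier _ dsum_proj_hom m E_carrier[OF e(1)]])
      (rule internal_dsum_submodules(1)[OF ds])
  also have "\<dots> = \<zero>"
    using e(2) minus_self C_carrier dsum_proj_decomp(1)[OF ds m] by simp
  finally have "m \<ominus> e \<in> D"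
    using dsum_proj_zero_imp_mem m E_carrier[OF e(1)] by simp
  moreover have "m = e \<oplus> (m \<ominus> e)"
    using add_minus_cancel_left m E_carrier[OF e(1)] by simp
  ultimately show "\<exists>e\<in>E. \<exists>d\<in>D. m = e \<oplus> d"
    using e(1) by blast
next
  let ?p = "dsum_proj M C D"
  note E_carrier = submodule_subset[OF E, THEN subsetD]
    and D_carrier = submodule_subset[OF internal_dsum_submodules(2)[OF ds], THEN subsetD]
  fix e e' d d'
  assume h: "e \<in> E" "e' \<in> E" "d \<in> D" "d' \<in> D" "e \<oplus> d = e' \<oplus> d'"
  have "?p e = ?p (e \<oplus> d)"
    using dsum_proj_add_right[OF E_carrier[OF h(1)] h(3)] by simp
  also have "\<dots> = ?p e'"
    using dsum_proj_add_right[OF E_carrier[OF h(2)] h(4)] h(5) by simp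
  finally have "e = e'"
    using h(1,2) bij unfolding bij_betw_def by (metis inj_onD)
  then show "e = e' \<and> d = d'"
    using h E_carrier D_carrier by auto
qed

end

end

context left_module
begin

lemma mod_iso_submodD:
  assumes "mod_iso R (submod M X) (submod M Y) \<phi>"
  shows "submodule_hom R M X Y \<phi>" and "bij_betw \<phi> X Y"
  using assms bij_betw_apply unfolding mod_iso_def submod_def submodule_hom_def by auto

context
  fixes X Y s t
  assumes X: "submodule X R M" and Y: "submodule Y R M"
    and s: "submodule_hom R M X Y s" and t: "submodule_hom R M Y X t"
    and ts: "\<And>x. x \<in> X \<Longrightarrow> t (s x) = x"
begin

lemma retract_split_bij: "bij_betw (\<lambda>y. (t y, y \<ominus> s (t y))) Y (X \<times> {y \<in> Y. t y = \<zero>})"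
proof (rule bij_betw_byWitness[where f' = "\<lambda>(x, z). s x \<oplus> z"])
  note X_carrier = submodule_subset[OF X, THEN subsetD]
    and Y_carrier = submodule_subset[OF Y, THEN subsetD]
  have st: "s (t y) \<in> Y" if "y \<in> Y" for y
    using submodule_hom_closed[OF s submodule_hom_closed[OF t that]] .
  show "\<forall>y\<in>Y. (\<lambda>(x, z). s x \<oplus> z) (t y, y \<ominus> s (t y)) = y"
    using add_minus_cancel_left Y_carrier st by simp
  show "\<forall>p\<in>X \<times> {y \<in> Y. t y = \<zero>}. (\<lambda>y. (t y, y \<ominus> s (t y))) ((\<lambda>(x, z). s x \<oplus> z) p) = p"
  proof
    fix p assume "p \<in> X \<times> {y \<in> Y. t y = \<zero>}"
    then obtain x z where p: "p = (x, z)" "x \<in> X" "z \<in> Y" "t z = \<zero>"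
      by blast
    have sx: "s x \<in> Y"
      using submodule_hom_closed[OF s p(2)] .
    have "t (s x \<oplus> z) = x"
      using p submodule_hom_add[OF t sx p(3)] ts X_carrier by simp
    then show "(\<lambda>y. (t y, y \<ominus> s (t y))) ((\<lambda>(x, z). s x \<oplus> z) p) = p"
      using p add_minus_cancel_left' Y_carrier sx by simp
  qed
  show "(\<lambda>y. (t y, y \<ominus> s (t y))) ` Y \<subseteq> X \<times> {y \<in> Y. t y = \<zero>}"
  proof (rule image_subsetI)
    fix y assume y: "y \<in> Y"
    have "t (y \<ominus> s (t y)) = \<zero>"
      using submodule_hom_diff[OF Y X t y st[OF y]] ts submodule_hom_closed[OF t y]
        minus_self X_carrier by simp
    then show "(t y, y \<ominus> s (t y)) \<in> X \<times> {y \<in> Y. t y = \<zero>}"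
      using submodule_hom_closed[OF t y] submodule_diff[OF Y y st[OF y]] by simp
  qed
  show "(\<lambda>(x, z). s x \<oplus> z) ` (X \<times> {y \<in> Y. t y = \<zero>}) \<subseteq> Y"
    using submodule_hom_closed[OF s] submodule_add[OF Y] by auto
qed

lemma retract_split_iso:
  "mod_iso R (submod M Y) (ext_dsum (submod M X) (submod M {y \<in> Y. t y = \<zero>}))
     (\<lambda>y. (t y, y \<ominus> s (t y)))"
proof -
  note Y_carrier = submodule_subset[OF Y, THEN subsetD]
  have st: "s (t y) \<in> Y" if "y \<in> Y" for y
    using submodule_hom_closed[OF s submodule_hom_closed[OF t that]] .
  have "s (t (x \<oplus> y)) = s (t x) \<oplus> s (t y)" if "x \<in> Y" "y \<in> Y" for x y
    using submodule_hom_add[OF t that] submodule_hom_add[OF s] submodule_hom_closed[OF t] that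
    by simp
  then have add: "x \<oplus> y \<ominus> s (t (x \<oplus> y)) = (x \<ominus> s (t x)) \<oplus> (y \<ominus> s (t y))"
    if "x \<in> Y" "y \<in> Y" for x y
    using add_minus_add Y_carrier that st by simp
  have "s (t (a \<odot> y)) = a \<odot> s (t y)" if "a \<in> carrier R" "y \<in> Y" for a y
    using submodule_hom_smult[OF t that] submodule_hom_smult[OF s] submodule_hom_closed[OF t]
      that by simp
  then have smult: "a \<odot> y \<ominus> s (t (a \<odot> y)) = a \<odot> (y \<ominus> s (t y))"
    if "a \<in> carrier R" "y \<in> Y" for a y
    using smult_r_diff Y_carrier that st by simp
  show ?thesis
    unfolding mod_iso_def submod_def ext_dsum_def
    using retract_split_bij submodule_hom_add[OF t] submodule_hom_smult[OF t] add smult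
    by (simp add: submod_def)
qed

lemma retract_divisor: "divisor R (submod M X) (submod M Y)"
  using retract_split_iso submodule_lmodule[OF submodule_kernel[OF Y X t]]
  unfolding divisor_def mod_isomorphic_def by blast

end

lemma inj_on_complement_of_nilpotent:
  assumes X: "submodule X R M"
    and h: "submodule_hom R M X X h" and n: "submodule_hom R M X X n"
    and sum: "\<And>x. x \<in> X \<Longrightarrow> h x \<oplus> n x = x"
    and nilpotent: "\<And>x. x \<in> X \<Longrightarrow> (n ^^ k) x = \<zero>"
  shows "inj_on h X"
  unfolding submodule_hom_inj_on_iff[OF X X h]
proof (intro ballI impI)
  fix x assume x: "x \<in> X" and "h x = \<zero>"
  then have "n x = x"
    using sum[OF x] submodule_hom_closed[OF n x] submodule_subset[OF X] by auto
  then have "(n ^^ k) x = x"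
    by (induction k) simp_all
  then show "x = \<zero>"
    using nilpotent[OF x] by simp
qed

end

locale finite_length_module = left_module +
  assumes finite_length: "finite_length R M"
begin

lemma submodule_chain_stabilizes:
  fixes S :: "nat \<Rightarrow> _"
  assumes sub: "\<And>k. submodule (S k) R M" and mono: "mono S \<or> antimono S"
  shows "\<exists>k. \<forall>j\<ge>k. S j = S k"
proof -
  have "S i \<subseteq> S j \<or> S j \<subseteq> S i" if "i \<le> j" for i j
    using mono monoD[of S, OF _ that] antimonoD[of S, OF _ that] by blast
  then have "S i \<subseteq> S j \<or> S j \<subseteq> S i" for i j
    using nat_le_linear[of i j] by blast
  then have "\<forall>A\<in>range S. \<forall>B\<in>range S. A \<subseteq> B \<or> B \<subseteq> A"
    by blast
  moreover have "range S \<subseteq> {N. submodule N R M}"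
    using sub by blast
  ultimately have "finite (range S)"
    using finite_length unfolding finite_length_def by blast
  then show ?thesis
    by (rule mono_finite_range_eventually_const[OF _ mono])
qed

lemma funpow_image_kernel_stabilize:
  assumes X: "submodule X R M" and n: "submodule_hom R M X X n"
  shows "\<exists>k. (n ^^ Suc k) ` X = (n ^^ k) ` X \<and>
    {x \<in> X. (n ^^ Suc k) x = \<zero>} = {x \<in> X. (n ^^ k) x = \<zero>}"
proof -
  define I where "I j = (n ^^ j) ` X" for j
  define K where "K j = {x \<in> X. (n ^^ j) x = \<zero>}" for j
  have "submodule (I j) R M" for j
    unfolding I_def by (rule submodule_image[OF X X submodule_hom_funpow[OF n]])
  moreover have "antimono I"
    unfolding antimono_iff_le_Suc I_def funpow_Suc_right image_comp[symmetric]
    using submodule_hom_closed[OF n] by (auto intro: image_mono)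
  ultimately obtain k1 where k1: "\<forall>j\<ge>k1. I j = I k1"
    using submodule_chain_stabilizes[of I] by blast
  have "submodule (K j) R M" for j
    unfolding K_def by (rule submodule_kernel[OF X X submodule_hom_funpow[OF n]])
  moreover have "mono K"
    unfolding mono_iff_le_Suc K_def using submodule_hom_zero[OF X X n] by auto
  ultimately obtain k2 where k2: "\<forall>j\<ge>k2. K j = K k2"
    using submodule_chain_stabilizes[of K] by blast
  define k where "k = max k1 k2"
  have "I (Suc k) = I k"
    using k1[rule_format, of k] k1[rule_format, of "Suc k"] unfolding k_def by simp
  moreover have "K (Suc k) = K k"
    using k2[rule_format, of k] k2[rule_format, of "Suc k"] unfolding k_def by simp
  ultimately show ?thesis
    unfolding I_def K_def by blast
qed

lemma fitting_automorphism:
  assumes X: "submodule X R M" and n: "submodule_hom R M X X n"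
  shows "\<exists>k. bij_betw n ((n ^^ k) ` X) ((n ^^ k) ` X)"
proof -
  obtain k where I: "(n ^^ Suc k) ` X = (n ^^ k) ` X"
    and K: "{x \<in> X. (n ^^ Suc k) x = \<zero>} = {x \<in> X. (n ^^ k) x = \<zero>}"
    using funpow_image_kernel_stabilize[OF X n] by blast
  define X' where "X' = (n ^^ k) ` X"
  have X': "submodule X' R M"
    unfolding X'_def by (rule submodule_image[OF X X submodule_hom_funpow[OF n]])
  have "X' \<subseteq> X"
    unfolding X'_def using submodule_hom_closed[OF submodule_hom_funpow[OF n]] by blast
  moreover have surj: "n ` X' = X'"
    using I unfolding X'_def by (simp add: image_comp)
  ultimately have n_X': "submodule_hom R M X' X' n"
    using submodule_hom_mono[OF n, of X' X'] by simp
  have "inj_on n X'"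
    unfolding submodule_hom_inj_on_iff[OF X' X' n_X']
  proof (intro ballI impI)
    fix x assume "x \<in> X'" "n x = \<zero>"
    then obtain y where "y \<in> X" "x = (n ^^ k) y" "(n ^^ Suc k) y = \<zero>"
      unfolding X'_def by auto
    then show "x = \<zero>"
      using K by blast
  qed
  with surj show ?thesis
    unfolding bij_betw_def X'_def by blast
qed

lemma inj_on_endo_surj:
  assumes X: "submodule X R M" and h: "submodule_hom R M X X h" and inj: "inj_on h X"
  shows "h ` X = X"
proof -
  obtain k where bij: "bij_betw h ((h ^^ k) ` X) ((h ^^ k) ` X)"
    using fitting_automorphism[OF X h] by blast
  have hX: "h ` X \<subseteq> X"
    using submodule_hom_closed[OF h] by auto
  have "(h ^^ k) ` h ` X = (h ^^ Suc k) ` X"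
    by (simp only: funpow_Suc_right image_comp)
  also have "\<dots> = h ` (h ^^ k) ` X"
    by (simp add: image_comp)
  also have "\<dots> = (h ^^ k) ` X"
    using bij by (simp add: bij_betw_def)
  finally show ?thesis
    using inj_on_image_eq_iff[OF inj_on_funpow[OF inj hX] hX order_refl] by blast
qed

lemma coprime_comp_nilpotent:
  assumes X: "submodule X R M" and Y: "submodule Y R M"
    and coprime: "coprime_mod R (submod M X) (submod M Y)"
    and f: "submodule_hom R M X Y f" and g: "submodule_hom R M Y X g"
  shows "\<exists>k. \<forall>x\<in>X. ((\<lambda>x. g (f x)) ^^ k) x = \<zero>"
proof -
  define n where "n = (\<lambda>x. g (f x))"
  have n: "submodule_hom R M X X n"
    unfolding n_def by (rule submodule_hom_comp[OF f g])
  obtain k where bij_n: "bij_betw n ((n ^^ k) ` X) ((n ^^ k) ` X)"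
    using fitting_automorphism[OF X n] by blast
  define X' where "X' = (n ^^ k) ` X"
  have X': "submodule X' R M"
    unfolding X'_def by (rule submodule_image[OF X X submodule_hom_funpow[OF n]])
  have X'X: "X' \<subseteq> X"
    unfolding X'_def using submodule_hom_closed[OF submodule_hom_funpow[OF n]] by blast
  have nk: "submodule_hom R M X X' (n ^^ k)"
    unfolding X'_def using submodule_hom_mono[OF submodule_hom_funpow[OF n]] by blast
  have bij: "bij_betw (n ^^ Suc k) X' X'"
    unfolding X'_def by (rule bij_betw_funpow[OF bij_n])
  then have "(n ^^ Suc k) ` X' \<subseteq> X'"
    using bij_betw_imp_surj_on by blast
  then have "submodule_hom R M X' X' (n ^^ Suc k)"
    by (rule submodule_hom_mono[OF submodule_hom_funpow[OF n] X'X])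
  define u where "u = the_inv_into X' (n ^^ Suc k)"
  have u: "submodule_hom R M X' X' u"
    unfolding u_def by (rule submodule_hom_the_inv_into[OF X' X' _ bij]) fact
  define r where "r y = u ((n ^^ k) (g y))" for y
  have r: "submodule_hom R M Y X' r"
    unfolding r_def by (rule submodule_hom_comp[OF submodule_hom_comp[OF g nk] u])
  have rf: "r (f x) = x" if "x \<in> X'" for x
    using the_inv_into_f_f[OF bij_betw_imp_inj_on[OF bij] that]
    unfolding r_def u_def n_def funpow_Suc_right by simp
  have f': "submodule_hom R M X' Y f"
    using submodule_hom_mono[OF f X'X] submodule_hom_closed[OF f] X'X by blast
  have "divisor R (submod M X') (submod M X)"
    using retract_divisor[OF X' X _ submodule_hom_comp[OF f r] rf]
      submodule_hom_mono[OF submodule_hom_id order_refl] X'X by blast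
  moreover have "divisor R (submod M X') (submod M Y)"
    by (rule retract_divisor[OF X' Y f' r rf])
  ultimately have "carrier (submod M X') = {\<zero>\<^bsub>submod M X'\<^esub>}"
    using coprime submodule_lmodule[OF X'] unfolding coprime_mod_def by blast
  then show ?thesis
    unfolding submod_def X'_def n_def by auto
qed

lemma bij_betw_if_inj_on_comp:
  assumes A: "submodule A R M" and B: "submodule B R M"
    and u: "submodule_hom R M A B u" and v: "submodule_hom R M B A v"
    and \<phi>: "submodule_hom R M A B \<phi>" "bij_betw \<phi> A B"
    and inj: "inj_on (\<lambda>y. u (v y)) B"
  shows "bij_betw u A B" and "bij_betw v B A"
proof -
  have "inj_on v B"
    using inj_on_imageI2[of u v B] inj by (simp add: comp_def)
  then have "inj_on (v \<circ> \<phi>) A"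
    using comp_inj_on[OF bij_betw_imp_inj_on[OF \<phi>(2)]] bij_betw_imp_surj_on[OF \<phi>(2)] by simp
  then have "bij_betw (v \<circ> \<phi>) A A"
    using inj_on_endo_surj[OF A submodule_hom_comp[OF \<phi>(1) v]] by (simp add: bij_betw_def comp_def)
  then show bij_v: "bij_betw v B A"
    using bij_betw_comp_iff[OF \<phi>(2)] by blast
  have "bij_betw (u \<circ> v) B B"
    using inj inj_on_endo_surj[OF B submodule_hom_comp[OF v u] inj]
    by (simp add: bij_betw_def comp_def)
  then show "bij_betw u A B"
    using bij_betw_comp_iff[OF bij_v] by blast
qed

lemma coprime_summand_projections_bij:
  assumes coprime: "coprime_mod R (submod M A1) (submod M A2)"
    and dsA: "internal_dsum R M A1 A2" and dsB: "internal_dsum R M B1 B2"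
    and iso: "mod_isomorphic R (submod M A1) (submod M B1)"
  shows "bij_betw (dsum_proj M B1 B2) A1 B1" and "bij_betw (dsum_proj M A1 A2) B1 A1"
proof -
  note A1 = internal_dsum_submodules(1)[OF dsA] and A2 = internal_dsum_submodules(2)[OF dsA]
    and B1 = internal_dsum_submodules(1)[OF dsB]
  let ?pA = "dsum_proj M A1 A2" and ?qA = "dsum_proj M A2 A1" and ?pB = "dsum_proj M B1 B2"
  obtain \<phi> where "mod_iso R (submod M A1) (submod M B1) \<phi>"
    using iso unfolding mod_isomorphic_def by blast
  note \<phi> = mod_iso_submodD[OF this]
  define \<psi> where "\<psi> = the_inv_into A1 \<phi>"
  have \<psi>: "submodule_hom R M B1 A1 \<psi>"
    unfolding \<psi>_def by (rule submodule_hom_the_inv_into[OF A1 B1 \<phi>])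
  have \<psi>\<phi>: "\<psi> (\<phi> x) = x" if "x \<in> A1" for x
    unfolding \<psi>_def using the_inv_into_f_f[OF bij_betw_imp_inj_on[OF \<phi>(2)] that] .
  have hom_on: "submodule_hom R M X Y h"
    if "submodule_hom R M (carrier M) Y h" and "submodule X R M" for X Y h
    using submodule_hom_mono[OF that(1) submodule_subset[OF that(2)]] submodule_hom_closed[OF that(1)]
      submodule_subset[OF that(2)] by blast
  note pA = hom_on[OF dsum_proj_hom[OF dsA]] and pB = hom_on[OF dsum_proj_hom[OF dsB]]
    and qA = hom_on[OF dsum_proj_hom[OF internal_dsum_commute[OF dsA]]]
  define f where "f x = ?qA (\<phi> x)" for x
  define g where "g y = \<psi> (?pB y)" for y
  have g: "submodule_hom R M (carrier M) A1 g"
    unfolding g_def by (rule submodule_hom_comp[OF dsum_proj_hom[OF dsB] \<psi>])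
  have split: "g (?pA (\<phi> x)) \<oplus> g (f x) = x" if x: "x \<in> A1" for x
  proof -
    have \<phi>x: "\<phi> x \<in> carrier M"
      using submodule_hom_closed[OF \<phi>(1) x] submodule_subset[OF B1] by blast
    have "x = g (\<phi> x)"
      unfolding g_def using dsum_proj_self[OF dsB] submodule_hom_closed[OF \<phi>(1) x] \<psi>\<phi>[OF x]
      by simp
    also have "\<dots> = g (?pA (\<phi> x) \<oplus> ?qA (\<phi> x))"
      using dsum_proj_decomp(3)[OF dsA \<phi>x] by simp
    also have "\<dots> = g (?pA (\<phi> x)) \<oplus> g (f x)"
      unfolding f_def using submodule_hom_add[OF g] dsum_proj_decomp(1,2)[OF dsA \<phi>x]
        submodule_subset[OF A1] submodule_subset[OF A2] by blast
    finally show ?thesis ..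
  qed
  have f: "submodule_hom R M A1 A2 f"
    unfolding f_def by (rule submodule_hom_comp[OF \<phi>(1) qA[OF B1]])
  obtain k where nilpotent: "\<forall>x\<in>A1. ((\<lambda>x. g (f x)) ^^ k) x = \<zero>"
    using coprime_comp_nilpotent[OF A1 A2 coprime f hom_on[OF g A2]] by blast
  have "inj_on (\<lambda>x. g (?pA (\<phi> x))) A1"
    by (rule inj_on_complement_of_nilpotent[OF A1 _ submodule_hom_comp[OF f hom_on[OF g A2]] split])
      (use nilpotent submodule_hom_comp[OF submodule_hom_comp[OF \<phi>(1) pA[OF B1]] hom_on[OF g A1]]
        in auto)
  then have "inj_on (\<psi> \<circ> ((\<lambda>y. ?pB (?pA y)) \<circ> \<phi>)) A1"
    by (simp add: g_def comp_def)
  then have "inj_on ((\<lambda>y. ?pB (?pA y)) \<circ> \<phi>) A1"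
    by (rule inj_on_imageI2)
  then have "inj_on (\<lambda>y. ?pB (?pA y)) (\<phi> ` A1)"
    by (rule inj_on_imageI)
  then have "inj_on (\<lambda>y. ?pB (?pA y)) B1"
    by (simp add: bij_betw_imp_surj_on[OF \<phi>(2)])
  then show "bij_betw ?pB A1 B1" and "bij_betw ?pA B1 A1"
    using bij_betw_if_inj_on_comp[OF A1 B1 pB[OF A1] pA[OF B1] \<phi>] by blast+
qed

end

theorem proposition2p9:
  fixes R :: "('r, 'z) ring_scheme" and M :: "('r, 'a) module"
    and A1 A2 B1 B2 :: "'a set"
  assumes "lmodule R M"
    and "finite_length R M"
    and "submodule A1 R M" and "submodule A2 R M"
    and "submodule B1 R M" and "submodule B2 R M"
    and "coprime_mod R (submod M A1) (submod M A2)"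
    and "internal_dsum R M A1 A2"
    and "internal_dsum R M B1 B2"
    and "mod_isomorphic R (submod M A1) (submod M B1)"
  shows "internal_dsum R M A1 B2 \<and> internal_dsum R M B1 A2"
proof -
  interpret finite_length_module R M
    using assms(1,2) by (simp add: finite_length_module_def finite_length_module_axioms_def left_module_def)
  note bij = coprime_summand_projections_bij[OF assms(7-10)]
  show ?thesis
    using internal_dsum_exchange[OF assms(9,3) bij(1)] internal_dsum_exchange[OF assms(8,5) bij(2)]
    by blast
qed

end
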